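(* Let $u\in\mathrm{BMO}(\mathbb R)$ be complex-valued and let $\varphi:\mathbb R\to\mathbb C$ satisfy $|\varphi(x)|\le Ce^{-|x|}$ for some $C>0$ and $\int_{\mathbb R}\varphi(x)dx=1$. Then there is a constant $K\ge1$, which stays bounded as long as $\|u\|_*$ stays bounded (for fixed $\varphi$), such that for all $x\in\mathbb R$, $y>0$, $$K^{-1}\,|e^{u_{I(x,y)}}|\le|e^{(\varphi_y*u)(x)}|\le K\,|e^{u_{I(x,y)}}|.$$
   Context: $u_I=|I|^{-1}\int_Iu$, $\|u\|_*=\sup_I|I|^{-1}\int_I|u-u_I|$ over bounded intervals, $\mathrm{BMO}(\mathbb R)=\{\|u\|_*<\infty\}$. $\varphi_y(x)=y^{-1}\varphi(x/y)$, $I(x,y)=(x-y,x+y)$. *)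

theory Defs
  imports "HOL-Analysis.Analysis"
begin

definition avg :: "(real \<Rightarrow> complex) \<Rightarrow> real \<Rightarrow> real \<Rightarrow> complex" where
  "avg u a b = (LINT t:{a<..<b}|lborel. u t) / complex_of_real (b - a)"

definition mean_osc :: "(real \<Rightarrow> complex) \<Rightarrow> real \<Rightarrow> real \<Rightarrow> real" where
  "mean_osc u a b = (LINT t:{a<..<b}|lborel. cmod (u t - avg u a b)) / (b - a)"

definition in_BMO :: "(real \<Rightarrow> complex) \<Rightarrow> bool" where
  "in_BMO u \<longleftrightarrow> (\<forall>a b. a < b \<longrightarrow> set_integrable lborel {a<..<b} u)
      \<and> bdd_above {mean_osc u a b | a b. a < b}"

definition bmo_norm :: "(real \<Rightarrow> complex) \<Rightarrow> real" where
  "bmo_norm u = Sup {mean_osc u a b | a b. a < b}"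

definition dil :: "(real \<Rightarrow> complex) \<Rightarrow> real \<Rightarrow> real \<Rightarrow> complex" where
  "dil \<phi> y x = \<phi> (x / y) / complex_of_real y"

definition conv :: "(real \<Rightarrow> complex) \<Rightarrow> (real \<Rightarrow> complex) \<Rightarrow> real \<Rightarrow> complex" where
  "conv f u x = (LINT t|lborel. f (x - t) * u t)"

end

theory Submission
  imports Defs "HOL-Real_Asymp.Real_Asymp"
begin

text \<open>Since \<open>\<phi>\<^sub>y\<close> has integral 1, \<open>(\<phi>\<^sub>y * u)(x) - u\<^sub>I\<close> is the integral of
  \<open>\<phi>\<^sub>y(x - t) (u(t) - u\<^sub>I)\<close> with \<open>I = I(x,y)\<close>. Cover the line by the dilates \<open>I\<^sub>k = I(x,(k+1)y)\<close>;
  on \<open>I\<^sub>k\<close> outside \<open>I\<^bsub>k-1\<^esub>\<close> the kernel is at most \<open>C e\<^bsup>-k\<^esup> / y\<close>, while the BMO condition gives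
  \<open>\<integral>\<^bsub>I\<^sub>k\<^esub> |u - u\<^sub>I| \<le> |I\<^sub>k| (1 + |I\<^sub>k|/|I|) \<parallel>u\<parallel>\<^sub>* = O(k\<^sup>2 y \<parallel>u\<parallel>\<^sub>*)\<close>. Summing,
  \<open>|(\<phi>\<^sub>y * u)(x) - u\<^sub>I| \<le> L\<close> with \<open>L\<close> linear in \<open>\<parallel>u\<parallel>\<^sub>*\<close>, and \<open>K = e\<^sup>L\<close> works
  because \<open>|e\<^sup>z| = e\<^bsup>Re z\<^esup>\<close>.\<close>

lemma in_BMO_set_integrable:
  "in_BMO u \<Longrightarrow> a < b \<Longrightarrow> set_integrable lborel {a<..<b} u"
  unfolding in_BMO_def by blast

lemma in_BMO_borel_measurable:
  assumes "in_BMO u" shows "u \<in> borel_measurable lborel"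
proof (rule borel_measurable_LIMSEQ_metric)
  fix n :: nat
  show "(\<lambda>t. indicator {-real n - 1<..<real n + 1} t *\<^sub>R u t) \<in> borel_measurable lborel"
    using in_BMO_set_integrable[OF assms, of "-real n - 1" "real n + 1"]
    unfolding set_integrable_def by (simp add: borel_measurable_integrable)
next
  fix t :: real
  obtain N :: nat where "\<bar>t\<bar> \<le> real N" using real_arch_simple by blast
  then have "\<forall>n\<ge>N. indicator {-real n - 1<..<real n + 1} t *\<^sub>R u t = u t"
    by (auto simp: indicator_def)
  then show "(\<lambda>n. indicator {-real n - 1<..<real n + 1} t *\<^sub>R u t) \<longlonglongrightarrow> u t"
    by (intro tendsto_eventually) (auto simp: eventually_sequentially)
qed

lemma mean_osc_le_bmo_norm:
  "in_BMO u \<Longrightarrow> a < b \<Longrightarrow> mean_osc u a b \<le> bmo_norm u"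
  unfolding bmo_norm_def in_BMO_def by (auto intro!: cSup_upper)

lemma mean_osc_nonneg: "a < b \<Longrightarrow> 0 \<le> mean_osc u a b"
  unfolding mean_osc_def set_lebesgue_integral_def
  by (auto intro!: divide_nonneg_pos integral_nonneg)

lemma bmo_norm_nonneg: "in_BMO u \<Longrightarrow> 0 \<le> bmo_norm u"
  using mean_osc_le_bmo_norm[of u 0 1] mean_osc_nonneg[of 0 1 u] by simp

lemma set_integrable_Ioo_const:
  "set_integrable lborel {a<..<b::real} (\<lambda>_. c :: 'a :: {banach, second_countable_topology})"
proof -
  have "emeasure lborel {a<..<b} < \<infinity>"
    by (cases "a \<le> b") auto
  then show ?thesis
    unfolding set_integrable_def
    by (intro integrable_scaleR_left integrable_real_indicator) auto
qed

lemma set_integrable_norm_diff: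
  assumes "in_BMO u" "a < b"
  shows "set_integrable lborel {a<..<b} (\<lambda>t. cmod (u t - c))"
  using assms by (intro set_integrable_norm set_integral_diff in_BMO_set_integrable
      set_integrable_Ioo_const)

lemma norm_avg_diff_le:
  assumes "in_BMO u" "a < b"
  shows "cmod (avg u a b - c) \<le> (LINT t:{a<..<b}|lborel. cmod (u t - c)) / (b - a)"
proof -
  have u: "set_integrable lborel {a<..<b} u"
    using assms by (rule in_BMO_set_integrable)
  have "(LINT t:{a<..<b}|lborel. c) = of_real (b - a) * c"
    using assms by (subst set_integral_const) (auto simp: emeasure_lborel_Ioo scaleR_conv_of_real)
  then have "(LINT t:{a<..<b}|lborel. u t - c) = (LINT t:{a<..<b}|lborel. u t) - of_real (b - a) * c"
    using u set_integrable_Ioo_const[of a b c] by (simp add: set_integral_diff)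
  also have "\<dots> = of_real (b - a) * (avg u a b - c)"
    using assms unfolding avg_def by (simp add: field_simps)
  finally have "(b - a) * cmod (avg u a b - c) = cmod (LINT t:{a<..<b}|lborel. u t - c)"
    using assms by (simp add: norm_mult of_real_diff[symmetric] del: of_real_diff)
  also have "\<dots> \<le> (LINT t:{a<..<b}|lborel. cmod (u t - c))"
    using u by (intro set_integral_norm_bound set_integral_diff set_integrable_Ioo_const)
  finally show ?thesis
    using assms by (simp add: field_simps)
qed

lemma set_integral_norm_diff_mono:
  assumes "in_BMO u" "a' \<le> a" "a < b" "b \<le> b'"
  shows "(LINT t:{a<..<b}|lborel. cmod (u t - c)) \<le> (LINT t:{a'<..<b'}|lborel. cmod (u t - c))"
  using set_integrable_norm_diff[OF assms(1), of a b c] set_integrable_norm_diff[OF assms(1), of a' b' c]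
    assms
  unfolding set_lebesgue_integral_def set_integrable_def
  by (intro integral_mono) (auto simp: indicator_def)

lemma norm_avg_diff_avg_le:
  assumes u: "in_BMO u" and ab: "a' \<le> a" "a < b" "b \<le> b'"
  shows "cmod (avg u a b - avg u a' b') \<le> (b' - a') / (b - a) * bmo_norm u"
proof -
  have "cmod (avg u a b - avg u a' b') \<le> (LINT t:{a'<..<b'}|lborel. cmod (u t - avg u a' b')) / (b - a)"
    using ab by (intro order_trans[OF norm_avg_diff_le[OF u ab(2)]] divide_right_mono
        set_integral_norm_diff_mono[OF u]) auto
  also have "\<dots> = (b' - a') / (b - a) * mean_osc u a' b'"
    using ab unfolding mean_osc_def by simp
  also have "\<dots> \<le> (b' - a') / (b - a) * bmo_norm u"
    using ab by (intro mult_left_mono mean_osc_le_bmo_norm[OF u]) auto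
  finally show ?thesis .
qed

lemma set_integral_norm_diff_avg_le:
  assumes u: "in_BMO u" and ab: "a' \<le> a" "a < b" "b \<le> b'"
  shows "(LINT t:{a'<..<b'}|lborel. cmod (u t - avg u a b))
           \<le> (b' - a') * (1 + (b' - a') / (b - a)) * bmo_norm u"
proof -
  let ?c = "avg u a b" and ?c' = "avg u a' b'"
  have ab': "a' < b'" using ab by simp
  have osc: "set_integrable lborel {a'<..<b'} (\<lambda>t. cmod (u t - ?c'))"
    using u ab' by (rule set_integrable_norm_diff)
  have const: "set_integrable lborel {a'<..<b'} (\<lambda>_. cmod (?c' - ?c))"
    by (rule set_integrable_Ioo_const)
  have "(LINT t:{a'<..<b'}|lborel. cmod (u t - ?c))
      \<le> (LINT t:{a'<..<b'}|lborel. cmod (u t - ?c') + cmod (?c' - ?c))"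
    using set_integrable_norm_diff[OF u ab', of ?c] set_integral_add[OF osc const]
    by (intro set_integral_mono) (auto intro: order_trans[OF _ norm_triangle_ineq])
  also have "\<dots> = (b' - a') * mean_osc u a' b' + (b' - a') * cmod (?c' - ?c)"
    using osc const ab' by (simp add: set_integral_add set_integral_const mean_osc_def)
  also have "\<dots> \<le> (b' - a') * bmo_norm u + (b' - a') * ((b' - a') / (b - a) * bmo_norm u)"
    using ab' norm_avg_diff_avg_le[OF u ab]
    by (intro add_mono mult_left_mono mean_osc_le_bmo_norm[OF u]) (auto simp: norm_minus_commute)
  finally show ?thesis
    by (simp add: algebra_simps)
qed

definition decay_series :: real where
  "decay_series = (\<Sum>k. exp (- real k) * ((real k + 1) * (real k + 2)))"

lemma summable_decay_series:
  "summable (\<lambda>k::nat. exp (- real k) * ((real k + 1) * (real k + 2)))"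
proof (rule summable_comparison_test_bigo)
  show "summable (\<lambda>k::nat. norm (inverse (real k ^ 2)))"
    using inverse_power_summable[of 2, where 'a=real] by simp
  show "(\<lambda>k::nat. exp (- real k) * ((real k + 1) * (real k + 2))) \<in> O(\<lambda>k. inverse (real k ^ 2))"
    by real_asymp
qed

lemma decay_series_nonneg: "0 \<le> decay_series"
  unfolding decay_series_def by (intro suminf_nonneg summable_decay_series) simp

lemma dilated_interval_index:
  assumes "y > 0"
  obtains k :: nat where "t \<in> {x - (real k + 1) * y<..<x + (real k + 1) * y}"
    and "exp (- \<bar>x - t\<bar> / y) \<le> exp (- real k)"
proof
  let ?k = "nat \<lfloor>\<bar>x - t\<bar> / y\<rfloor>"
  have "real ?k = of_int \<lfloor>\<bar>x - t\<bar> / y\<rfloor>"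
    using assms by simp
  then have k: "real ?k \<le> \<bar>x - t\<bar> / y" "\<bar>x - t\<bar> / y < real ?k + 1"
    by linarith+
  then show "exp (- \<bar>x - t\<bar> / y) \<le> exp (- real ?k)"
    by simp
  have "\<bar>x - t\<bar> < (real ?k + 1) * y"
    using k(2) assms by (simp add: field_simps)
  then show "t \<in> {x - (real ?k + 1) * y<..<x + (real ?k + 1) * y}"
    by auto
qed

lemma nn_integral_exp_weighted_osc_le:
  assumes u: "in_BMO u" and y: "y > 0"
  shows "(\<integral>\<^sup>+t. ennreal (exp (- \<bar>x - t\<bar> / y) * cmod (u t - avg u (x - y) (x + y))) \<partial>lborel)
           \<le> ennreal (2 * y * decay_series * bmo_norm u)"
proof -
  define h where "h t = cmod (u t - avg u (x - y) (x + y))" for t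
  define I where "I k = {x - (real k + 1) * y<..<x + (real k + 1) * y}" for k :: nat
  have [measurable]: "u \<in> borel_measurable lborel"
    using u by (rule in_BMO_borel_measurable)
  have cover: "ennreal (exp (- \<bar>x - t\<bar> / y) * h t)
      \<le> (\<Sum>k. ennreal (exp (- real k) * (indicator (I k) t * h t)))" for t
  proof -
    obtain k where k: "t \<in> I k" "exp (- \<bar>x - t\<bar> / y) \<le> exp (- real k)"
      using dilated_interval_index[OF y] unfolding I_def by blast
    have "exp (- \<bar>x - t\<bar> / y) * h t \<le> exp (- real k) * h t"
      using k(2) by (intro mult_right_mono) (auto simp: h_def)
    then have "ennreal (exp (- \<bar>x - t\<bar> / y) * h t)
        \<le> ennreal (exp (- real k) * (indicator (I k) t * h t))"
      using k(1) by (intro ennreal_leI) simp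
    also have "\<dots> = (\<Sum>j\<in>{k}. ennreal (exp (- real j) * (indicator (I j) t * h t)))"
      by simp
    also have "\<dots> \<le> (\<Sum>j. ennreal (exp (- real j) * (indicator (I j) t * h t)))"
      by (rule sum_le_suminf) auto
    finally show ?thesis .
  qed
  have dilate_bound: "(\<integral>\<^sup>+t. ennreal (exp (- real k) * (indicator (I k) t * h t)) \<partial>lborel)
      \<le> ennreal (2 * y * bmo_norm u * (exp (- real k) * ((real k + 1) * (real k + 2))))" for k
  proof -
    have "set_integrable lborel (I k) h"
      unfolding I_def h_def using y by (intro set_integrable_norm_diff[OF u]) simp
    then have "(\<integral>\<^sup>+t. ennreal (exp (- real k) * (indicator (I k) t * h t)) \<partial>lborel)
        = ennreal (exp (- real k) * (LINT t:I k|lborel. h t))"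
      unfolding set_integrable_def set_lebesgue_integral_def
      by (subst nn_integral_eq_integral) (auto simp: h_def)
    also have "\<dots> \<le> ennreal (exp (- real k) * (2 * (real k + 1) * y * (1 + (real k + 1)) * bmo_norm u))"
    proof -
      have len: "x + (real k + 1) * y - (x - (real k + 1) * y) = 2 * (real k + 1) * y"
        and ratio: "2 * (real k + 1) * y / (x + y - (x - y)) = real k + 1"
        using y by (simp_all add: field_simps)
      show ?thesis
        using set_integral_norm_diff_avg_le[OF u, of "x - (real k + 1) * y" "x - y" "x + y"
            "x + (real k + 1) * y", unfolded len ratio] y
        unfolding I_def h_def by (intro ennreal_leI mult_left_mono) auto
    qed
    finally show ?thesis
      by (simp add: algebra_simps)
  qed
  have "(\<integral>\<^sup>+t. ennreal (exp (- \<bar>x - t\<bar> / y) * h t) \<partial>lborel)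
      \<le> (\<Sum>k. \<integral>\<^sup>+t. ennreal (exp (- real k) * (indicator (I k) t * h t)) \<partial>lborel)"
    using cover by (subst nn_integral_suminf[symmetric]) (auto simp: I_def h_def intro!: nn_integral_mono)
  also have "\<dots> \<le> (\<Sum>k. ennreal (2 * y * bmo_norm u * (exp (- real k) * ((real k + 1) * (real k + 2)))))"
    by (intro suminf_le dilate_bound) auto
  also have "\<dots> = ennreal (\<Sum>k. 2 * y * bmo_norm u * (exp (- real k) * ((real k + 1) * (real k + 2))))"
    using y bmo_norm_nonneg[OF u] by (intro suminf_ennreal2 summable_mult summable_decay_series) auto
  also have "\<dots> = ennreal (2 * y * decay_series * bmo_norm u)"
    unfolding decay_series_def suminf_mult[OF summable_decay_series] by (simp add: mult_ac)
  finally show ?thesis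
    unfolding h_def .
qed

lemma integrable_exp_weighted_osc:
  assumes u: "in_BMO u" and y: "y > 0"
  shows "integrable lborel (\<lambda>t. exp (- \<bar>x - t\<bar> / y) * cmod (u t - avg u (x - y) (x + y)))"
proof (rule integrableI_nonneg)
  show "(\<lambda>t. exp (- \<bar>x - t\<bar> / y) * cmod (u t - avg u (x - y) (x + y))) \<in> borel_measurable lborel"
    using in_BMO_borel_measurable[OF u] by measurable
  show "(\<integral>\<^sup>+t. ennreal (exp (- \<bar>x - t\<bar> / y) * cmod (u t - avg u (x - y) (x + y))) \<partial>lborel) < \<infinity>"
    using nn_integral_exp_weighted_osc_le[OF u y, of x] by (simp add: le_less_trans)
qed simp

lemma integral_exp_weighted_osc_le:
  assumes u: "in_BMO u" and y: "y > 0"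
  shows "(LINT t|lborel. exp (- \<bar>x - t\<bar> / y) * cmod (u t - avg u (x - y) (x + y)))
           \<le> 2 * y * decay_series * bmo_norm u"
  using nn_integral_exp_weighted_osc_le[OF u y, of x] integrable_exp_weighted_osc[OF u y, of x]
    y bmo_norm_nonneg[OF u] decay_series_nonneg
  by (subst (asm) nn_integral_eq_integral) auto

lemma norm_dil_le:
  assumes decay: "\<And>x. cmod (\<phi> x) \<le> C * exp (- \<bar>x\<bar>)" and y: "y > 0"
  shows "cmod (dil \<phi> y s) \<le> C / y * exp (- \<bar>s\<bar> / y)"
  using divide_right_mono[OF decay[of "s / y"], of y] y
  by (simp add: dil_def norm_divide abs_divide)

lemma dil_reflect_eq_affine: "dil \<phi> y (x - t) = \<phi> (x / y + (- 1 / y) * t) / of_real y"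
  unfolding dil_def by (simp add: diff_divide_distrib)

lemma integrable_dil_reflect:
  assumes "integrable lborel \<phi>" "y \<noteq> 0"
  shows "integrable lborel (\<lambda>t. dil \<phi> y (x - t))"
  unfolding dil_reflect_eq_affine
  using lborel_integrable_real_affine[OF assms(1), of "- 1 / y" "x / y"] assms(2)
  by (intro integrable_divide) simp

lemma integral_dil_reflect:
  assumes "y > 0" shows "(LINT t|lborel. dil \<phi> y (x - t)) = (LINT t|lborel. \<phi> t)"
  using lborel_integral_real_affine[of "- 1 / y" \<phi> "x / y"] assms
  unfolding dil_reflect_eq_affine by (simp add: scaleR_conv_of_real field_simps)

lemma norm_conv_dil_minus_avg_le:
  assumes decay: "\<And>x. cmod (\<phi> x) \<le> C * exp (- \<bar>x\<bar>)"
    and int1: "(LINT x|lborel. \<phi> x) = 1"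
    and u: "in_BMO u" and y: "y > 0"
  shows "cmod (conv (dil \<phi> y) u x - avg u (x - y) (x + y)) \<le> 2 * C * decay_series * bmo_norm u"
proof -
  define a where "a = avg u (x - y) (x + y)"
  define k where "k t = dil \<phi> y (x - t)" for t
  define w where "w t = exp (- \<bar>x - t\<bar> / y) * cmod (u t - a)" for t
  have "integrable lborel \<phi>"
    \<comment> \<open>non-integrable functions have Bochner integral 0\<close>
    using int1 not_integrable_integral_eq by fastforce
  then have k_int: "integrable lborel k"
    unfolding k_def using y by (intro integrable_dil_reflect) auto
  have w_int: "integrable lborel w"
    unfolding w_def a_def using u y by (rule integrable_exp_weighted_osc)
  have "0 \<le> C"
    using order_trans[OF norm_ge_zero decay[of 0]] by simp
  have [measurable]: "u \<in> borel_measurable lborel" "k \<in> borel_measurable lborel"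
    using in_BMO_borel_measurable[OF u] k_int by auto
  have k_bound: "cmod (k t * (u t - a)) \<le> C / y * w t" for t
    using mult_right_mono[OF norm_dil_le[OF decay y, of "x - t"] norm_ge_zero[of "u t - a"]]
    unfolding k_def w_def by (simp add: norm_mult mult_ac)
  have g_int: "integrable lborel (\<lambda>t. k t * (u t - a))"
  proof (rule Bochner_Integration.integrable_bound)
    show "integrable lborel (\<lambda>t. C / y * w t)"
      using w_int by simp
    show "(\<lambda>t. k t * (u t - a)) \<in> borel_measurable lborel"
      by measurable
    show "AE t in lborel. cmod (k t * (u t - a)) \<le> norm (C / y * w t)"
      using k_bound \<open>0 \<le> C\<close> y by (intro AE_I2) (simp add: w_def abs_mult)
  qed
  have "conv (dil \<phi> y) u x = (LINT t|lborel. k t * (u t - a) + k t * a)"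
    unfolding conv_def k_def by (simp add: algebra_simps)
  also have "\<dots> = (LINT t|lborel. k t * (u t - a)) + (LINT t|lborel. k t) * a"
    using g_int k_int by (simp add: Bochner_Integration.integral_add)
  also have "(LINT t|lborel. k t) = 1"
    unfolding k_def integral_dil_reflect[OF y] by (rule int1)
  finally have "cmod (conv (dil \<phi> y) u x - a) = cmod (LINT t|lborel. k t * (u t - a))"
    by simp
  also have "\<dots> \<le> (LINT t|lborel. C / y * w t)"
    using g_int w_int k_bound by (intro order_trans[OF integral_norm_bound] integral_mono) auto
  also have "\<dots> = C / y * (LINT t|lborel. w t)"
    by simp
  also have "\<dots> \<le> C / y * (2 * y * decay_series * bmo_norm u)"
    using integral_exp_weighted_osc_le[OF u y, of x] \<open>0 \<le> C\<close> y
    unfolding w_def a_def by (intro mult_left_mono) auto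
  finally show ?thesis
    using y unfolding a_def by (simp add: field_simps)
qed

lemma norm_exp_bounds_of_norm_diff_le:
  fixes z w :: complex
  assumes "cmod (z - w) \<le> L"
  shows "cmod (exp w) / exp L \<le> cmod (exp z) \<and> cmod (exp z) \<le> exp L * cmod (exp w)"
proof -
  have "\<bar>Re z - Re w\<bar> \<le> L"
    using abs_Re_le_cmod[of "z - w"] assms by simp
  then show ?thesis
    by (auto simp: norm_exp_eq_Re exp_diff[symmetric] exp_add[symmetric] abs_le_iff)
qed

theorem proposition3p3:
  fixes \<phi> :: "real \<Rightarrow> complex" and C :: real
  assumes meas: "\<phi> \<in> borel_measurable lborel"
    and C_pos: "C > 0"
    and decay: "\<And>x. cmod (\<phi> x) \<le> C * exp (- \<bar>x\<bar>)"
    and int1: "(LINT x|lborel. \<phi> x) = 1"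
  shows "\<forall>B. \<exists>K\<ge>1. \<forall>u. in_BMO u \<and> bmo_norm u \<le> B \<longrightarrow>
           (\<forall>x. \<forall>y>0.
              cmod (exp (avg u (x - y) (x + y))) / K \<le> cmod (exp (conv (dil \<phi> y) u x))
            \<and> cmod (exp (conv (dil \<phi> y) u x)) \<le> K * cmod (exp (avg u (x - y) (x + y))))"
proof -
  define L where "L B = 2 * C * decay_series * max B 0" for B
  have "1 \<le> exp (L B)" for B
    unfolding L_def using C_pos decay_series_nonneg by simp
  moreover have "cmod (conv (dil \<phi> y) u x - avg u (x - y) (x + y)) \<le> L B"
    if "in_BMO u" "bmo_norm u \<le> B" "y > 0" for u x y B
    using norm_conv_dil_minus_avg_le[OF decay int1 that(1,3), of x] that(2) C_pos decay_series_nonneg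
    unfolding L_def by (elim order_trans) (simp add: mult_left_mono)
  ultimately show ?thesis
    using norm_exp_bounds_of_norm_diff_le by blast
qed

end
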